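(* Let $t=\lceil\frac{n-\kappa}{2}\rceil$ and write $\mathrm{Small}(x)=\mathrm{Small}_t(x)$. Suppose $\mathrm{Small}(u)$ exists and $v\in\mathrm{Side}_{\mathrm{Small}(u)}(u)$. Then $\mathrm{Small}(v)$ exists, $\mathrm{Side}_{\mathrm{Small}(v)}(v)\subseteq\mathrm{Side}_{\mathrm{Small}(u)}(u)$, and either $\mathrm{Small}(v)=\mathrm{Small}(u)$ or $\mathrm{Small}(v)\subseteq\mathrm{Small}(u)\cup\mathrm{Side}_{\mathrm{Small}(u)}(u)$ (i.e. $\mathrm{Small}(v)$ is a laminar cut of $\mathrm{Small}(u)$).
   Context: $G=(V,E)$ is a finite, simple, connected, undirected, non-complete graph with $n=|V|$; $\kappa$ is its vertex connectivity, assumed $\kappa<n/4$. A cut is a set $U\subset V$ whose removal disconnects $G$; a $\kappa$-cut is a cut of size $\kappa$; a side of $U$ is a connected component of the subgraph induced on $V\setminus U$; $\mathrm{Side}_U(x)$ is the side containing $x\notin U$. For a vertex $x$ and $t\le\lceil\frac{n-\kappa}{2}\rceil$, $\mathrm{Small}_t(x)$ denotes, when it exists, the unique $\kappa$-cut $Y$ with $x\notin Y$, $|\mathrm{Side}_Y(x)|\le t$, and $\mathrm{Side}_Y(x)\subseteq\mathrm{Side}_U(x)$ for every $\kappa$-cut $U$ with $x\notin U$ and $|\mathrm{Side}_U(x)|\le t$ (it exists iff some $\kappa$-cut $U$ with $x\notin U$ has $|\mathrm{Side}_U(x)|\le t$). *)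

theory Defs
  imports Main
begin

definition simple_graph :: "'a set \<Rightarrow> ('a \<Rightarrow> 'a \<Rightarrow> bool) \<Rightarrow> bool" where
  "simple_graph V E \<longleftrightarrow> finite V \<and> (\<forall>x y. E x y \<longrightarrow> x \<in> V \<and> y \<in> V)
     \<and> (\<forall>x y. E x y \<longrightarrow> E y x) \<and> (\<forall>x. \<not> E x x)"

definition reach :: "('a \<Rightarrow> 'a \<Rightarrow> bool) \<Rightarrow> 'a set \<Rightarrow> 'a \<Rightarrow> 'a \<Rightarrow> bool" where
  "reach E S x y \<longleftrightarrow> x \<in> S \<and> y \<in> S \<and> (\<lambda>a b. E a b \<and> a \<in> S \<and> b \<in> S)\<^sup>*\<^sup>* x y"

definition connected_graph :: "'a set \<Rightarrow> ('a \<Rightarrow> 'a \<Rightarrow> bool) \<Rightarrow> bool" where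
  "connected_graph V E \<longleftrightarrow> V \<noteq> {} \<and> (\<forall>x\<in>V. \<forall>y\<in>V. reach E V x y)"

definition complete_graph :: "'a set \<Rightarrow> ('a \<Rightarrow> 'a \<Rightarrow> bool) \<Rightarrow> bool" where
  "complete_graph V E \<longleftrightarrow> (\<forall>x\<in>V. \<forall>y\<in>V. x \<noteq> y \<longrightarrow> E x y)"

definition is_cut :: "'a set \<Rightarrow> ('a \<Rightarrow> 'a \<Rightarrow> bool) \<Rightarrow> 'a set \<Rightarrow> bool" where
  "is_cut V E U \<longleftrightarrow> U \<subseteq> V \<and> (\<exists>x\<in>V - U. \<exists>y\<in>V - U. \<not> reach E (V - U) x y)"

text \<open>Vertex connectivity (for non-complete graphs): minimum size of a cut.\<close>
definition kappa :: "'a set \<Rightarrow> ('a \<Rightarrow> 'a \<Rightarrow> bool) \<Rightarrow> nat" where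
  "kappa V E = (LEAST k. \<exists>U. is_cut V E U \<and> card U = k)"

definition kcut :: "'a set \<Rightarrow> ('a \<Rightarrow> 'a \<Rightarrow> bool) \<Rightarrow> 'a set \<Rightarrow> bool" where
  "kcut V E U \<longleftrightarrow> is_cut V E U \<and> card U = kappa V E"

definition side :: "'a set \<Rightarrow> ('a \<Rightarrow> 'a \<Rightarrow> bool) \<Rightarrow> 'a set \<Rightarrow> 'a \<Rightarrow> 'a set" where
  "side V E U x = {y. reach E (V - U) x y}"

definition is_small :: "'a set \<Rightarrow> ('a \<Rightarrow> 'a \<Rightarrow> bool) \<Rightarrow> nat \<Rightarrow> 'a \<Rightarrow> 'a set \<Rightarrow> bool" where
  "is_small V E t x Y \<longleftrightarrow> kcut V E Y \<and> x \<notin> Y \<and> card (side V E Y x) \<le> t \<and>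
     (\<forall>U. kcut V E U \<and> x \<notin> U \<and> card (side V E U x) \<le> t \<longrightarrow> side V E Y x \<subseteq> side V E U x)"

definition small :: "'a set \<Rightarrow> ('a \<Rightarrow> 'a \<Rightarrow> bool) \<Rightarrow> nat \<Rightarrow> 'a \<Rightarrow> 'a set" where
  "small V E t x = (THE Y. is_small V E t x Y)"

definition small_exists :: "'a set \<Rightarrow> ('a \<Rightarrow> 'a \<Rightarrow> bool) \<Rightarrow> nat \<Rightarrow> 'a \<Rightarrow> bool" where
  "small_exists V E t x \<longleftrightarrow> (\<exists>Y. is_small V E t x Y)"

text \<open>t = ceil((n - kappa)/2), computed in nat (n > kappa here).\<close>
definition tval :: "'a set \<Rightarrow> ('a \<Rightarrow> 'a \<Rightarrow> bool) \<Rightarrow> nat" where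
  "tval V E = (card V - kappa V E + 1) div 2"

end

theory Submission
  imports Defs
begin

text \<open>As v lies on the small side of Small(u), its own side with respect to Small(u) is
  contained in Side(u) and has at most t vertices; hence Small(v) exists and, by minimality,
  its side stays inside Side(u). A \<kappa>-cut with a side of at most t vertices is exactly the
  neighbourhood of that side, so Small(v) consists of neighbours of Side(u), all of which lie
  in Small(u) \<union> Side(u). Existence of Small(v) rests on uncrossing: for \<kappa>-cuts U1, U2 with
  sides A1, A2 of at most t vertices at v, the corner separating A1 \<inter> A2 and the opposite
  corner have sizes adding up to 2\<kappa>, and the opposite corner has at least \<kappa> vertices
  (it is a cut, or it is all of V outside A1 \<union> A2, which has fewer than 2t vertices).\<close>

definition separated_by :: "'a set \<Rightarrow> ('a \<Rightarrow> 'a \<Rightarrow> bool) \<Rightarrow> 'a set \<Rightarrow> 'a set \<Rightarrow> bool" where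
  "separated_by V E X C \<longleftrightarrow> C \<subseteq> V - X \<and> (\<forall>a\<in>C. \<forall>b\<in>V - X. E a b \<longrightarrow> b \<in> C)"

definition nbhd :: "'a set \<Rightarrow> ('a \<Rightarrow> 'a \<Rightarrow> bool) \<Rightarrow> 'a set \<Rightarrow> 'a set" where
  "nbhd V E A = {y \<in> V - A. \<exists>a\<in>A. E a y}"

definition corner :: "'a set \<Rightarrow> 'a set \<Rightarrow> 'a set \<Rightarrow> 'a set \<Rightarrow> 'a set" where
  "corner U\<^sub>1 A\<^sub>1 U\<^sub>2 A\<^sub>2 = (A\<^sub>1 \<inter> U\<^sub>2) \<union> (U\<^sub>1 \<inter> U\<^sub>2) \<union> (U\<^sub>1 \<inter> A\<^sub>2)"

lemma reach_separated:
  assumes "reach E (V - X) x y" "x \<in> C" "separated_by V E X C"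
  shows "y \<in> C"
proof -
  from assms(1) have "(\<lambda>a b. E a b \<and> a \<in> V - X \<and> b \<in> V - X)\<^sup>*\<^sup>* x y"
    by (simp add: reach_def)
  then show ?thesis
    by (induction rule: rtranclp_induct) (use assms(2,3) in \<open>auto simp: separated_by_def\<close>)
qed

lemma side_subset_separated: "x \<in> C \<Longrightarrow> separated_by V E X C \<Longrightarrow> side V E X x \<subseteq> C"
  unfolding side_def using reach_separated[of E V X x _ C] by blast

lemma self_in_side: "x \<in> V - U \<Longrightarrow> x \<in> side V E U x"
  by (auto simp: side_def reach_def)

lemma separated_side: "separated_by V E U (side V E U x)"
  unfolding separated_by_def side_def reach_def by (auto intro: rtranclp.rtrancl_into_rtrancl)

lemma side_subset: "side V E U x \<subseteq> V - U"
  by (auto simp: side_def reach_def)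

lemma separated_complement:
  assumes "\<And>a b. E a b \<Longrightarrow> E b a" "separated_by V E U C"
  shows "separated_by V E U (V - U - C)"
  using assms unfolding separated_by_def by blast

lemma separated_Int:
  assumes "separated_by V E U\<^sub>1 C\<^sub>1" "separated_by V E U\<^sub>2 C\<^sub>2"
  shows "separated_by V E (corner U\<^sub>1 C\<^sub>1 U\<^sub>2 C\<^sub>2) (C\<^sub>1 \<inter> C\<^sub>2)"
  using assms unfolding separated_by_def corner_def by blast

lemma separated_nbhd: "A \<subseteq> V \<Longrightarrow> separated_by V E (nbhd V E A) A"
  unfolding separated_by_def nbhd_def by blast

lemma nbhd_subset_separated:
  "separated_by V E X C \<Longrightarrow> A \<subseteq> C \<Longrightarrow> nbhd V E A \<subseteq> X \<union> C"
  unfolding separated_by_def nbhd_def by blast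

lemma is_cut_if_separated:
  assumes "X \<subseteq> V" "separated_by V E X C" "a \<in> C" "b \<in> V - X - C"
  shows "is_cut V E X"
proof -
  have "\<not> reach E (V - X) a b" using reach_separated[of E V X a b C] assms(2-4) by blast
  moreover have "a \<in> V - X" using assms(2,3) unfolding separated_by_def by blast
  ultimately show ?thesis unfolding is_cut_def using assms(1,4) by blast
qed

lemma is_cut_if_separated_small:
  assumes "finite V" "X \<subseteq> V" "separated_by V E X C" "x \<in> C" "card X + card C < card V"
  shows "is_cut V E X"
proof -
  have "X \<union> C \<subseteq> V" using assms(2,3) unfolding separated_by_def by blast
  then have "finite (X \<union> C)" using assms(1) by (rule finite_subset)
  moreover have "card (X \<union> C) < card V" using card_Un_le[of X C] assms(5) by linarith
  ultimately have "\<not> V \<subseteq> X \<union> C" using card_mono[of "X \<union> C" V] by linarith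
  then obtain b where "b \<in> V - X - C" by blast
  then show ?thesis using is_cut_if_separated[OF assms(2-4)] by blast
qed

lemma kappa_le_card: "is_cut V E X \<Longrightarrow> kappa V E \<le> card X"
  unfolding kappa_def by (rule Least_le) blast

lemma card_cut_pos:
  assumes "finite V" "connected_graph V E" "is_cut V E U"
  shows "0 < card U"
proof (rule ccontr)
  assume "\<not> 0 < card U"
  moreover have "finite U" using assms(3) finite_subset[OF _ assms(1)] unfolding is_cut_def by blast
  ultimately have "U = {}" by simp
  then show False using assms(2,3) unfolding connected_graph_def is_cut_def by auto
qed

lemma card_Un3_disjoint:
  assumes "finite A" "finite B" "finite C" "A \<inter> B = {}" "A \<inter> C = {}" "B \<inter> C = {}"
  shows "card (A \<union> B \<union> C) = card A + card B + card C"
  using assms by (simp add: card_Un_disjoint Int_Un_distrib2)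

lemma card_split3:
  assumes "finite S" "S \<subseteq> P\<^sub>1 \<union> P\<^sub>2 \<union> P\<^sub>3" "P\<^sub>1 \<inter> P\<^sub>2 = {}" "P\<^sub>1 \<inter> P\<^sub>3 = {}" "P\<^sub>2 \<inter> P\<^sub>3 = {}"
  shows "card S = card (S \<inter> P\<^sub>1) + card (S \<inter> P\<^sub>2) + card (S \<inter> P\<^sub>3)"
proof -
  have "S = (S \<inter> P\<^sub>1) \<union> (S \<inter> P\<^sub>2) \<union> (S \<inter> P\<^sub>3)" using assms(2) by blast
  also have "card \<dots> = card (S \<inter> P\<^sub>1) + card (S \<inter> P\<^sub>2) + card (S \<inter> P\<^sub>3)"
    by (rule card_Un3_disjoint) (use assms in auto)
  finally show ?thesis .
qed

lemma card_corner_add_opposite: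
  assumes "finite V" "U\<^sub>1 \<subseteq> V" "U\<^sub>2 \<subseteq> V" "A\<^sub>1 \<subseteq> V - U\<^sub>1" "A\<^sub>2 \<subseteq> V - U\<^sub>2"
  shows "card (corner U\<^sub>1 A\<^sub>1 U\<^sub>2 A\<^sub>2) + card (corner U\<^sub>1 (V - U\<^sub>1 - A\<^sub>1) U\<^sub>2 (V - U\<^sub>2 - A\<^sub>2))
    = card U\<^sub>1 + card U\<^sub>2"
proof -
  define B\<^sub>1 where "B\<^sub>1 = V - U\<^sub>1 - A\<^sub>1"
  define B\<^sub>2 where "B\<^sub>2 = V - U\<^sub>2 - A\<^sub>2"
  have "U\<^sub>1 \<subseteq> V" "U\<^sub>2 \<subseteq> V" "A\<^sub>1 \<subseteq> V" "B\<^sub>1 \<subseteq> V" using assms(2-4) B\<^sub>1_def by auto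
  then have fin: "finite U\<^sub>1" "finite U\<^sub>2" "finite A\<^sub>1" "finite B\<^sub>1"
    using finite_subset[OF _ assms(1)] by blast+
  have U\<^sub>1: "card U\<^sub>1 = card (U\<^sub>1 \<inter> A\<^sub>2) + card (U\<^sub>1 \<inter> U\<^sub>2) + card (U\<^sub>1 \<inter> B\<^sub>2)"
    by (rule card_split3) (use fin assms(2,5) B\<^sub>2_def in auto)
  have U\<^sub>2: "card U\<^sub>2 = card (U\<^sub>2 \<inter> A\<^sub>1) + card (U\<^sub>2 \<inter> U\<^sub>1) + card (U\<^sub>2 \<inter> B\<^sub>1)"
    by (rule card_split3) (use fin assms(3,4) B\<^sub>1_def in auto)
  have "card (corner U\<^sub>1 A\<^sub>1 U\<^sub>2 A\<^sub>2) = card (A\<^sub>1 \<inter> U\<^sub>2) + card (U\<^sub>1 \<inter> U\<^sub>2) + card (U\<^sub>1 \<inter> A\<^sub>2)"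
    unfolding corner_def by (rule card_Un3_disjoint) (use fin assms(4,5) in auto)
  moreover have "card (corner U\<^sub>1 B\<^sub>1 U\<^sub>2 B\<^sub>2) = card (B\<^sub>1 \<inter> U\<^sub>2) + card (U\<^sub>1 \<inter> U\<^sub>2) + card (U\<^sub>1 \<inter> B\<^sub>2)"
    unfolding corner_def by (rule card_Un3_disjoint) (use fin B\<^sub>1_def B\<^sub>2_def in auto)
  ultimately show ?thesis using U\<^sub>1 U\<^sub>2 unfolding B\<^sub>1_def B\<^sub>2_def by (simp add: Int_commute)
qed

lemma opposite_corner_eq_outside:
  assumes "U\<^sub>1 \<subseteq> V" "U\<^sub>2 \<subseteq> V" "A\<^sub>1 \<subseteq> V - U\<^sub>1" "A\<^sub>2 \<subseteq> V - U\<^sub>2"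
    "(V - U\<^sub>1 - A\<^sub>1) \<inter> (V - U\<^sub>2 - A\<^sub>2) = {}"
  shows "corner U\<^sub>1 (V - U\<^sub>1 - A\<^sub>1) U\<^sub>2 (V - U\<^sub>2 - A\<^sub>2) = V - (A\<^sub>1 \<union> A\<^sub>2)"
  using assms unfolding corner_def by blast

lemma kcut_eq_nbhd_side:
  assumes "finite V" "kcut V E Z" "x \<in> V - Z" "card (side V E Z x) + kappa V E < card V"
  shows "Z = nbhd V E (side V E Z x)"
proof -
  define A where "A = side V E Z x"
  have Z: "Z \<subseteq> V" "card Z = kappa V E"
    using assms(2) unfolding kcut_def is_cut_def by auto
  have "finite Z" using Z(1) assms(1) by (rule finite_subset)
  have A: "A \<subseteq> V" "x \<in> A"
    using side_subset[of V E Z x] self_in_side[OF assms(3)] unfolding A_def by auto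
  have "nbhd V E A \<subseteq> Z \<union> A"
    unfolding A_def by (rule nbhd_subset_separated[OF separated_side]) simp
  then have N: "nbhd V E A \<subseteq> Z" by (auto simp: nbhd_def)
  then have "card (nbhd V E A) \<le> kappa V E" using card_mono[OF \<open>finite Z\<close> N] Z(2) by simp
  then have "card (nbhd V E A) + card A < card V" using assms(4) unfolding A_def by linarith
  moreover have "nbhd V E A \<subseteq> V" by (auto simp: nbhd_def)
  ultimately have "is_cut V E (nbhd V E A)"
    using is_cut_if_separated_small[OF assms(1) _ separated_nbhd[OF A(1)] A(2)] by blast
  then have "card Z \<le> card (nbhd V E A)" using kappa_le_card Z(2) by simp
  then have "nbhd V E A = Z" by (rule card_seteq[OF \<open>finite Z\<close> N])
  then show ?thesis unfolding A_def by simp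
qed

lemma is_small_eq_nbhd_side:
  assumes "finite V" "t + kappa V E < card V" "x \<in> V" "is_small V E t x Y"
  shows "Y = nbhd V E (side V E Y x)"
proof (rule kcut_eq_nbhd_side[OF assms(1)])
  show "kcut V E Y" "x \<in> V - Y" using assms(3,4) unfolding is_small_def by blast+
  have "card (side V E Y x) \<le> t" using assms(4) unfolding is_small_def by blast
  then show "card (side V E Y x) + kappa V E < card V" using assms(2) by linarith
qed

lemma is_small_unique:
  assumes "finite V" "t + kappa V E < card V" "x \<in> V" "is_small V E t x Y\<^sub>1" "is_small V E t x Y\<^sub>2"
  shows "Y\<^sub>1 = Y\<^sub>2"
proof -
  have "Y\<^sub>1 = nbhd V E (side V E Y\<^sub>1 x)" by (rule is_small_eq_nbhd_side[OF assms(1-4)])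
  also have "side V E Y\<^sub>1 x = side V E Y\<^sub>2 x" using assms(4,5) unfolding is_small_def by blast
  also have "nbhd V E (side V E Y\<^sub>2 x) = Y\<^sub>2" by (rule is_small_eq_nbhd_side[OF assms(1-3,5), symmetric])
  finally show ?thesis .
qed

lemma is_small_small:
  assumes "finite V" "t + kappa V E < card V" "x \<in> V" "small_exists V E t x"
  shows "is_small V E t x (small V E t x)"
proof -
  obtain Y where "is_small V E t x Y" using assms(4) unfolding small_exists_def by blast
  then show ?thesis
    unfolding small_def by (rule theI) (use \<open>is_small V E t x Y\<close> is_small_unique[OF assms(1-3)] in blast)
qed

lemma kappa_le_card_opposite_corner:
  assumes "finite V" "\<And>a b. E a b \<Longrightarrow> E b a" "U\<^sub>1 \<subseteq> V" "U\<^sub>2 \<subseteq> V"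
    and "separated_by V E U\<^sub>1 A\<^sub>1" "separated_by V E U\<^sub>2 A\<^sub>2" "v \<in> A\<^sub>1 \<inter> A\<^sub>2"
    and "card A\<^sub>1 + card A\<^sub>2 + kappa V E \<le> card V + 1"
  shows "kappa V E \<le> card (corner U\<^sub>1 (V - U\<^sub>1 - A\<^sub>1) U\<^sub>2 (V - U\<^sub>2 - A\<^sub>2))"
    (is "_ \<le> card ?X")
proof (cases "(V - U\<^sub>1 - A\<^sub>1) \<inter> (V - U\<^sub>2 - A\<^sub>2) = {}")
  case True
  have A: "A\<^sub>1 \<subseteq> V - U\<^sub>1" "A\<^sub>2 \<subseteq> V - U\<^sub>2" using assms(5,6) unfolding separated_by_def by auto
  then have fin: "finite A\<^sub>1" "finite A\<^sub>2" using finite_subset[OF _ assms(1)] by blast+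
  have "?X = V - (A\<^sub>1 \<union> A\<^sub>2)" using opposite_corner_eq_outside[OF assms(3,4) A True] .
  moreover have "A\<^sub>1 \<union> A\<^sub>2 \<subseteq> V" using A by blast
  ultimately have "card ?X = card V - card (A\<^sub>1 \<union> A\<^sub>2)"
    using fin by (simp add: card_Diff_subset)
  moreover have "card (A\<^sub>1 \<union> A\<^sub>2) + card (A\<^sub>1 \<inter> A\<^sub>2) = card A\<^sub>1 + card A\<^sub>2"
    using card_Un_Int[OF fin] by simp
  moreover have "0 < card (A\<^sub>1 \<inter> A\<^sub>2)" using assms(7) fin card_gt_0_iff by blast
  ultimately show ?thesis using assms(8) by linarith
next
  case False
  then obtain w where w: "w \<in> (V - U\<^sub>1 - A\<^sub>1) \<inter> (V - U\<^sub>2 - A\<^sub>2)" by blast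
  have sep: "separated_by V E ?X ((V - U\<^sub>1 - A\<^sub>1) \<inter> (V - U\<^sub>2 - A\<^sub>2))"
    using separated_Int[OF separated_complement[OF assms(2,5)] separated_complement[OF assms(2,6)]] .
  have "v \<in> V - ?X - (V - U\<^sub>1 - A\<^sub>1) \<inter> (V - U\<^sub>2 - A\<^sub>2)"
    using assms(5-7) unfolding separated_by_def corner_def by blast
  moreover have "?X \<subseteq> V" using assms(3,4) unfolding corner_def by blast
  ultimately have "is_cut V E ?X" using is_cut_if_separated[OF _ sep w] by blast
  then show ?thesis by (rule kappa_le_card)
qed

lemma kcut_inside_two_small_sides:
  assumes "simple_graph V E" "kcut V E U\<^sub>1" "kcut V E U\<^sub>2" "v \<in> V - U\<^sub>1" "v \<in> V - U\<^sub>2"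
    and "card (side V E U\<^sub>1 v) \<le> t" "card (side V E U\<^sub>2 v) \<le> t"
    and "2 * t + kappa V E \<le> card V + 1" "t + kappa V E < card V"
  obtains X where "kcut V E X" "v \<notin> X" "side V E X v \<subseteq> side V E U\<^sub>1 v \<inter> side V E U\<^sub>2 v"
proof -
  define A\<^sub>1 where "A\<^sub>1 = side V E U\<^sub>1 v"
  define A\<^sub>2 where "A\<^sub>2 = side V E U\<^sub>2 v"
  define X where "X = corner U\<^sub>1 A\<^sub>1 U\<^sub>2 A\<^sub>2"
  have fin: "finite V" and sym: "\<And>a b. E a b \<Longrightarrow> E b a"
    using assms(1) unfolding simple_graph_def by auto
  have U: "U\<^sub>1 \<subseteq> V" "U\<^sub>2 \<subseteq> V" "card U\<^sub>1 = kappa V E" "card U\<^sub>2 = kappa V E"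
    using assms(2,3) unfolding kcut_def is_cut_def by auto
  have sepA: "separated_by V E U\<^sub>1 A\<^sub>1" "separated_by V E U\<^sub>2 A\<^sub>2"
    unfolding A\<^sub>1_def A\<^sub>2_def by (rule separated_side)+
  have v: "v \<in> A\<^sub>1 \<inter> A\<^sub>2"
    unfolding A\<^sub>1_def A\<^sub>2_def using self_in_side[OF assms(4)] self_in_side[OF assms(5)] by blast
  have sepX: "separated_by V E X (A\<^sub>1 \<inter> A\<^sub>2)" unfolding X_def by (rule separated_Int[OF sepA])
  have "card A\<^sub>1 + card A\<^sub>2 + kappa V E \<le> card V + 1"
    using assms(6-8) unfolding A\<^sub>1_def A\<^sub>2_def by linarith
  then have "kappa V E \<le> card (corner U\<^sub>1 (V - U\<^sub>1 - A\<^sub>1) U\<^sub>2 (V - U\<^sub>2 - A\<^sub>2))"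
    using kappa_le_card_opposite_corner[OF fin _ U(1,2) sepA v] sym by blast
  moreover have "card X + card (corner U\<^sub>1 (V - U\<^sub>1 - A\<^sub>1) U\<^sub>2 (V - U\<^sub>2 - A\<^sub>2)) = 2 * kappa V E"
    using card_corner_add_opposite[OF fin U(1,2)] sepA U(3,4) unfolding X_def separated_by_def
    by simp
  ultimately have cX: "card X \<le> kappa V E" by linarith
  have "A\<^sub>1 \<subseteq> V" using sepA(1) unfolding separated_by_def by blast
  then have "finite A\<^sub>1" using fin by (rule finite_subset)
  then have "card (A\<^sub>1 \<inter> A\<^sub>2) \<le> t" using card_mono[of A\<^sub>1 "A\<^sub>1 \<inter> A\<^sub>2"] assms(6) A\<^sub>1_def by simp
  then have "card X + card (A\<^sub>1 \<inter> A\<^sub>2) < card V" using cX assms(9) by linarith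
  moreover have "X \<subseteq> V" using U(1,2) unfolding X_def corner_def by blast
  ultimately have "is_cut V E X" using is_cut_if_separated_small[OF fin _ sepX v] by blast
  then have "kcut V E X" unfolding kcut_def using kappa_le_card[OF \<open>is_cut V E X\<close>] cX by simp
  moreover have "v \<notin> X" using sepX v unfolding separated_by_def by blast
  moreover have "side V E X v \<subseteq> A\<^sub>1 \<inter> A\<^sub>2" using side_subset_separated[OF v sepX] .
  ultimately show thesis using that A\<^sub>1_def A\<^sub>2_def by blast
qed

text \<open>A cut whose side at v has the fewest vertices is Small(v): uncrossing it with any
  competitor yields a cut whose side lies in both sides, so by minimality it is the first.\<close>

lemma small_exists_if_small_side:
  assumes "simple_graph V E" "2 * t + kappa V E \<le> card V + 1" "t + kappa V E < card V"
    and "kcut V E U" "v \<in> V - U" "card (side V E U v) \<le> t"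
  shows "small_exists V E t v"
proof -
  define P where "P U \<longleftrightarrow> kcut V E U \<and> v \<notin> U \<and> card (side V E U v) \<le> t" for U
  have "P U" using assms(4-6) unfolding P_def by blast
  then obtain U\<^sub>0 where U\<^sub>0: "P U\<^sub>0"
    and min: "\<And>U. P U \<Longrightarrow> card (side V E U\<^sub>0 v) \<le> card (side V E U v)"
    using ex_has_least_nat[of P U "\<lambda>U. card (side V E U v)"] by blast
  have v: "v \<in> V" using assms(5) by blast
  have fin: "finite (side V E U\<^sub>0 v)"
    using side_subset[of V E U\<^sub>0 v] assms(1) finite_subset unfolding simple_graph_def by blast
  have "is_small V E t v U\<^sub>0" unfolding is_small_def
  proof (intro conjI allI impI)
    show U\<^sub>0': "kcut V E U\<^sub>0" "v \<notin> U\<^sub>0" "card (side V E U\<^sub>0 v) \<le> t"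
      using U\<^sub>0 unfolding P_def by blast+
    fix U assume U: "kcut V E U \<and> v \<notin> U \<and> card (side V E U v) \<le> t"
    obtain X where X: "kcut V E X" "v \<notin> X" "side V E X v \<subseteq> side V E U\<^sub>0 v \<inter> side V E U v"
      using kcut_inside_two_small_sides[OF assms(1) U\<^sub>0'(1) conjunct1[OF U] _ _ U\<^sub>0'(3) _ assms(2,3)]
        U\<^sub>0'(2) U v by blast
    have "card (side V E X v) \<le> card (side V E U\<^sub>0 v)" using card_mono[OF fin] X(3) by blast
    then have "P X" using X(1,2) U\<^sub>0'(3) unfolding P_def by linarith
    then have "card (side V E U\<^sub>0 v) \<le> card (side V E X v)" by (rule min)
    then have "side V E X v = side V E U\<^sub>0 v" using card_seteq[OF fin] X(3) by blast
    then show "side V E U\<^sub>0 v \<subseteq> side V E U v" using X(3) by blast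
  qed
  then show ?thesis unfolding small_exists_def by blast
qed

theorem lemma6:
  fixes V :: "'a set" and E :: "'a \<Rightarrow> 'a \<Rightarrow> bool" and u v :: 'a
  assumes "simple_graph V E"
    and "connected_graph V E"
    and "\<not> complete_graph V E"
    and "4 * kappa V E < card V"
    and "u \<in> V"
    and "small_exists V E (tval V E) u"
    and "v \<in> side V E (small V E (tval V E) u) u"
  shows "small_exists V E (tval V E) v
    \<and> side V E (small V E (tval V E) v) v \<subseteq> side V E (small V E (tval V E) u) u
    \<and> (small V E (tval V E) v = small V E (tval V E) u
       \<or> small V E (tval V E) v \<subseteq> small V E (tval V E) u \<union> side V E (small V E (tval V E) u) u)"
proof -
  define t where "t = tval V E"
  define Y where "Y = small V E t u"
  define S where "S = side V E Y u"
  have fin: "finite V" using assms(1) unfolding simple_graph_def by blast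
  obtain Y\<^sub>0 where "kcut V E Y\<^sub>0" using assms(6) unfolding small_exists_def is_small_def by blast
  then have "0 < kappa V E" using card_cut_pos[OF fin assms(2)] unfolding kcut_def by metis
  then have bounds: "t + kappa V E < card V" "2 * t + kappa V E \<le> card V + 1"
    using assms(4) unfolding t_def tval_def by linarith+
  have Y: "is_small V E t u Y"
    unfolding Y_def t_def by (rule is_small_small[OF fin bounds(1)[unfolded t_def] assms(5,6)])
  have "v \<in> S" using assms(7) unfolding S_def Y_def t_def .
  moreover have "S \<subseteq> V - Y" unfolding S_def by (rule side_subset)
  ultimately have v: "v \<in> V - Y" by blast
  have side_v: "side V E Y v \<subseteq> S"
    unfolding S_def by (rule side_subset_separated[OF \<open>v \<in> S\<close>[unfolded S_def] separated_side])
  have "finite S" using \<open>S \<subseteq> V - Y\<close> fin by (meson Diff_subset finite_subset subset_trans)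
  then have "card (side V E Y v) \<le> card S" using side_v by (rule card_mono)
  also have "card S \<le> t" using Y unfolding S_def is_small_def by blast
  finally have card_v: "card (side V E Y v) \<le> t" .
  have "kcut V E Y" using Y unfolding is_small_def by blast
  then have ex: "small_exists V E t v"
    using small_exists_if_small_side[OF assms(1) bounds(2,1) _ v card_v] by blast
  define Z where "Z = small V E t v"
  have "v \<in> V" using v by blast
  then have Z: "is_small V E t v Z" unfolding Z_def by (rule is_small_small[OF fin bounds(1) _ ex])
  then have side_Z: "side V E Z v \<subseteq> S"
    using \<open>kcut V E Y\<close> v card_v side_v unfolding is_small_def by blast
  have "Z = nbhd V E (side V E Z v)" by (rule is_small_eq_nbhd_side[OF fin bounds(1) \<open>v \<in> V\<close> Z])
  also have "\<dots> \<subseteq> Y \<union> S"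
    using side_Z unfolding S_def by (rule nbhd_subset_separated[OF separated_side])
  finally have "Z \<subseteq> Y \<union> S" .
  then show ?thesis using ex side_Z unfolding Z_def Y_def S_def t_def by blast
qed

end
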